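(* There exist an absolute constant $c>0$ and an infinite strictly increasing sequence of integer bases $(b_i)_{i\geq1}$, $b_i\ge 2$, such that $\overleftarrow{K}_{b_i}\geq c\log b_i$ for every $i$. In particular $\overleftarrow{K}_{b_i}\to\infty$ as $i\to\infty$.
   Context: For a base $b\ge2$ and a positive integer $n$ with $L$ digits in base $b$, $n=\sum_{0\leq i<L}\varepsilon_i(n)b^i$ ($\varepsilon_i(n)\in\{0,\dots,b-1\}$, $\varepsilon_{L-1}(n)\neq0$), its digital reverse is $\overleftarrow{n}=\sum_{0\leq i<L}\varepsilon_i(n)b^{L-1-i}$; a base-$b$ reversed prime is a number $\overleftarrow{p}$ with $p$ prime. $\overleftarrow{K}_b$ denotes the smallest integer $K$ such that every sufficiently large integer $N$ can be written as a sum of at most $K$ base-$b$ reversed primes, with $\overleftarrow{K}_b=\infty$ if no such $K$ exists. *)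

theory Defs
  imports "HOL-Computational_Algebra.Primes" "HOL-Library.Extended_Nat" Complex_Main
begin

definition num_digits :: "nat \<Rightarrow> nat \<Rightarrow> nat" where
  "num_digits b n = (LEAST L. n < b ^ L)"

definition digit :: "nat \<Rightarrow> nat \<Rightarrow> nat \<Rightarrow> nat" where
  "digit b n i = (n div b ^ i) mod b"

definition digit_rev :: "nat \<Rightarrow> nat \<Rightarrow> nat" where
  "digit_rev b n = (let L = num_digits b n in
     (\<Sum>i<L. digit b n i * b ^ (L - 1 - i)))"

definition rev_primes :: "nat \<Rightarrow> nat set" where
  "rev_primes b = {digit_rev b p | p. prime p}"

definition sum_at_most_rev_primes :: "nat \<Rightarrow> nat \<Rightarrow> nat \<Rightarrow> bool" where
  "sum_at_most_rev_primes b K N \<longleftrightarrow>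
     (\<exists>xs. length xs \<le> K \<and> set xs \<subseteq> rev_primes b \<and> sum_list xs = N)"

definition Krev :: "nat \<Rightarrow> enat" where
  "Krev b = (if \<exists>K. \<forall>\<^sub>F N in sequentially. sum_at_most_rev_primes b K N
             then enat (LEAST K. \<forall>\<^sub>F N in sequentially. sum_at_most_rev_primes b K N)
             else \<infinity>)"

end

theory Submission
  imports Defs
begin

text \<open>
Take the base \<open>b = 2\<^sup>n \<cdot> primorial n\<close>. The leading digit of the reversal of a prime \<open>p\<close> is
its last digit \<open>x = p mod b\<close>. Now \<open>x \<noteq> 0\<close>, since \<open>b\<close> is even and larger than 2; and if
\<open>2 \<le> x \<le> n\<close>, then a prime factor of \<open>x\<close> divides \<open>b\<close> and hence \<open>p\<close>, so \<open>p \<le> n < b\<close> is a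
single digit. Consequently every reversed prime not exceeding \<open>n \<cdot> b\<^sup>L\<close> is less than
\<open>2 \<cdot> b\<^sup>L\<close>, and writing \<open>n \<cdot> b\<^sup>L\<close> as a sum of reversed primes needs more than \<open>n / 2\<close>
summands. On the other hand the Chebyshev-type bound \<open>primorial n \<le> 4\<^sup>n\<close> gives
\<open>ln b \<le> 3 n\<close>, so \<open>Krev b \<ge> (ln b) / 6\<close>.
\<close>

definition primorial :: "nat \<Rightarrow> nat" where
  "primorial n = \<Prod>{p. prime p \<and> p \<le> n}"

lemma primorial_pos: "0 < primorial n"
  unfolding primorial_def by (rule prod_pos) (auto simp: prime_gt_0_nat)

lemma prime_dvd_primorial: "prime p \<Longrightarrow> p \<le> n \<Longrightarrow> p dvd primorial n"
  unfolding primorial_def by (rule dvd_prodI) auto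

lemma primorial_split:
  assumes "m \<le> n"
  shows "primorial n = primorial m * \<Prod>{p. prime p \<and> m < p \<and> p \<le> n}"
proof -
  have "{p. prime p \<and> p \<le> n} = {p. prime p \<and> p \<le> m} \<union> {p. prime p \<and> m < p \<and> p \<le> n}"
    using assms by auto
  then show ?thesis
    unfolding primorial_def by (subst prod.union_disjoint[symmetric]) auto
qed

lemma primorial_mono: "m \<le> n \<Longrightarrow> primorial m \<le> primorial n"
  using primorial_split[of m n] primorial_pos[of n] by (metis dvd_triv_left dvd_imp_le)

lemma primorial_le_four_pow_small: "n \<le> 2 \<Longrightarrow> primorial n \<le> 4 ^ n"
proof -
  assume "n \<le> 2"
  then consider "n \<le> 1" | "n = 2" by linarith
  then show ?thesis
  proof cases
    case 1
    then have no_primes: "{p. prime p \<and> p \<le> n} = {}" by (auto dest: prime_ge_2_nat)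
    show ?thesis unfolding primorial_def no_primes by simp
  next
    case 2
    then have "{p. prime p \<and> p \<le> n} = {2}" by (auto simp: le_antisym prime_ge_2_nat)
    then show ?thesis unfolding primorial_def using 2 by simp
  qed
qed

lemma prod_primes_dvd:
  fixes A :: "'a::factorial_semiring_gcd set"
  assumes "finite A" "\<And>p. p \<in> A \<Longrightarrow> prime p" "\<And>p. p \<in> A \<Longrightarrow> p dvd x"
  shows "\<Prod>A dvd x"
  using assms by (induction A rule: finite_induct)
    (auto intro!: divides_mult prod_coprime_right primes_coprime)

lemma binomial_odd_le_four_pow: "(2 * m + 1) choose m \<le> 4 ^ m"
proof -
  have "(2 * m + 1) choose m \<le> (\<Sum>k\<le>m. (2 * m + 1) choose k)"
    by (rule member_le_sum) auto
  also have "\<dots> = 4 ^ m"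
    by (subst binomial_r_part_sum) (simp add: power_mult)
  finally show ?thesis .
qed

lemma prime_dvd_binomial_odd:
  assumes "prime p" "m + 1 < p" "p \<le> 2 * m + 1"
  shows "p dvd (2 * m + 1) choose m"
proof -
  have "fact m * fact (m + 1) * ((2 * m + 1) choose m) = (fact (2 * m + 1) :: nat)"
    using binomial_fact_lemma[of m "2 * m + 1"] by (simp add: mult_2)
  moreover have "p dvd (fact (2 * m + 1) :: nat)"
    using assms prime_dvd_fact_iff[of p "2 * m + 1"] by blast
  moreover have "\<not> p dvd fact m * (fact (m + 1) :: nat)"
    using assms by (auto simp: prime_dvd_mult_iff prime_dvd_fact_iff simp del: fact_Suc)
  ultimately show ?thesis
    using assms(1) by (metis prime_dvd_mult_iff)
qed

lemma prod_primes_between_le_four_pow: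
  "\<Prod>{p. prime p \<and> m + 1 < p \<and> p \<le> 2 * m + 1} \<le> 4 ^ m"
proof -
  have "\<Prod>{p. prime p \<and> m + 1 < p \<and> p \<le> 2 * m + 1} dvd (2 * m + 1) choose m"
    using prime_dvd_binomial_odd[of _ m] by (intro prod_primes_dvd) auto
  then have "\<Prod>{p. prime p \<and> m + 1 < p \<and> p \<le> 2 * m + 1} \<le> (2 * m + 1) choose m"
    by (rule dvd_imp_le) simp
  with binomial_odd_le_four_pow[of m] show ?thesis by linarith
qed

lemma primorial_le_four_pow: "primorial n \<le> 4 ^ n"
proof (induction n rule: less_induct)
  case (less n)
  consider "n \<le> 2" | "even n" "2 < n" | m where "n = 2 * m + 1" "1 \<le> m"
  proof -
    have "n \<le> 2 \<or> (even n \<and> 2 < n) \<or> (\<exists>m. n = 2 * m + 1 \<and> 1 \<le> m)" by presburger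
    then show ?thesis using that by blast
  qed
  then show ?case
  proof cases
    case 1
    then show ?thesis by (rule primorial_le_four_pow_small)
  next
    case 2
    then have "\<not> prime n" using prime_odd_nat by blast
    moreover have "p = n" if "n - 1 < p" "p \<le> n" for p using that by linarith
    ultimately have no_primes: "{p. prime p \<and> n - 1 < p \<and> p \<le> n} = {}" by blast
    have "primorial n = primorial (n - 1)"
      using primorial_split[of "n - 1" n] unfolding no_primes by simp
    also have "\<dots> \<le> 4 ^ (n - 1)" using less 2 by simp
    also have "\<dots> \<le> 4 ^ n" by simp
    finally show ?thesis .
  next
    case 3
    have "primorial n = primorial (m + 1) * \<Prod>{p. prime p \<and> m + 1 < p \<and> p \<le> 2 * m + 1}"
      using primorial_split[of "m + 1" n] 3 by simp
    also have "\<dots> \<le> 4 ^ (m + 1) * 4 ^ m"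
      using less[of "m + 1"] 3 prod_primes_between_le_four_pow by (intro mult_le_mono) simp_all
    also have "\<dots> = 4 ^ n" using 3 by (simp flip: power_add)
    finally show ?thesis .
  qed
qed

lemma num_digits_bounds:
  assumes "1 < b" "0 < p"
  obtains E where "num_digits b p = Suc E" "b ^ E \<le> p" "p < b ^ Suc E"
proof -
  have ex: "\<exists>L. p < b ^ L" using power_gt_expt[of b p] assms(1) by auto
  have upper: "p < b ^ num_digits b p"
    unfolding num_digits_def by (rule LeastI_ex[OF ex])
  then obtain E where E: "num_digits b p = Suc E"
    using assms(2) by (cases "num_digits b p") auto
  have "\<not> p < b ^ E"
    using not_less_Least[of E "\<lambda>L. p < b ^ L"] E unfolding num_digits_def by simp
  with E upper show ?thesis by (intro that) simp_all
qed

lemma sum_reversed_digits_less_power: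
  fixes b :: nat
  assumes "\<And>j. d j < b"
  shows "(\<Sum>j<m. d j * b ^ (m - 1 - j)) < b ^ m"
  using assms
proof (induction m arbitrary: d)
  case 0
  then show ?case by simp
next
  case (Suc m)
  have "(\<Sum>j<Suc m. d j * b ^ (Suc m - 1 - j)) = d 0 * b ^ m + (\<Sum>j<m. d (Suc j) * b ^ (m - 1 - j))"
    by (subst sum.lessThan_Suc_shift) simp
  also have "\<dots> < (b - 1) * b ^ m + b ^ m"
  proof (rule add_le_less_mono)
    show "d 0 * b ^ m \<le> (b - 1) * b ^ m"
      using Suc.prems[of 0] by (intro mult_right_mono) simp_all
    show "(\<Sum>j<m. d (Suc j) * b ^ (m - 1 - j)) < b ^ m"
      by (rule Suc.IH) (rule Suc.prems)
  qed
  also have "\<dots> = b ^ Suc m"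
    using Suc.prems[of 0] by (cases b) simp_all
  finally show ?case .
qed

lemma digit_rev_leading_digit:
  assumes "1 < b" "0 < p"
  obtains E where "b ^ E \<le> p"
    "(p mod b) * b ^ E \<le> digit_rev b p" "digit_rev b p < (p mod b + 1) * b ^ E"
proof -
  obtain E where E: "num_digits b p = Suc E" "b ^ E \<le> p"
    using num_digits_bounds[OF assms] by metis
  have "digit_rev b p = (\<Sum>i<Suc E. digit b p i * b ^ (Suc E - 1 - i))"
    unfolding digit_rev_def E(1) by simp
  also have "\<dots> = p mod b * b ^ E + (\<Sum>j<E. digit b p (Suc j) * b ^ (E - 1 - j))"
    by (subst sum.lessThan_Suc_shift) (simp add: digit_def)
  finally have rev: "digit_rev b p = p mod b * b ^ E + (\<Sum>j<E. digit b p (Suc j) * b ^ (E - 1 - j))" .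
  have tail: "(\<Sum>j<E. digit b p (Suc j) * b ^ (E - 1 - j)) < b ^ E"
    by (rule sum_reversed_digits_less_power) (use assms in \<open>simp add: digit_def\<close>)
  show ?thesis
  proof (rule that[of E])
    show "b ^ E \<le> p" by (fact E(2))
    show "p mod b * b ^ E \<le> digit_rev b p" unfolding rev by simp
    show "digit_rev b p < (p mod b + 1) * b ^ E" unfolding rev distrib_right using tail by linarith
  qed
qed

lemma reversed_prime_le_imp_less:
  fixes b n p L :: nat
  assumes n: "2 \<le> n" "n < b" and smooth: "\<And>q. prime q \<Longrightarrow> q \<le> n \<Longrightarrow> q dvd b"
    and p: "prime p" and L: "1 \<le> L" and le: "digit_rev b p \<le> n * b ^ L"
  shows "digit_rev b p < 2 * b ^ L"
proof -
  define x where "x = p mod b"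
  have b: "1 < b" using n by linarith
  obtain E where E: "b ^ E \<le> p" and lower: "x * b ^ E \<le> digit_rev b p"
    and upper: "digit_rev b p < (x + 1) * b ^ E"
    using digit_rev_leading_digit[OF b prime_gt_0_nat[OF p]] unfolding x_def by metis
  have "b ^ 1 \<le> b ^ L" using b L by (simp only: power_increasing_iff)
  then have bL: "b \<le> b ^ L" by simp
  consider "x = 0" | "x = 1" | "2 \<le> x" "x \<le> n" | "n < x" by linarith
  then show ?thesis
  proof cases
    case 1
    have "2 dvd b" using smooth[of 2] n by simp
    moreover have "b dvd p" using 1 unfolding x_def by (simp add: mod_eq_0_iff_dvd)
    ultimately have "p = 2" using p by (metis dvd_trans two_is_prime_nat primes_dvd_imp_eq)
    with \<open>b dvd p\<close> have "b \<le> 2" by (simp add: dvd_imp_le)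
    with n show ?thesis by linarith
  next
    case 2
    have "b ^ E \<le> n * b ^ L" using lower le 2 by simp
    also have "\<dots> < b ^ Suc L" using n by simp
    finally have "E < Suc L" using b by (simp only: power_strict_increasing_iff)
    then have "b ^ E \<le> b ^ L" using b by (simp add: power_increasing_iff)
    with upper 2 show ?thesis by simp
  next
    case 3
    obtain q where q: "prime q" "q dvd x" using 3 prime_factor_nat[of x] by auto
    then have "q \<le> n" using 3 dvd_imp_le[of q x] by simp
    then have "q dvd b" using smooth q(1) by blast
    then have "q dvd p" using q(2) unfolding x_def by (simp add: dvd_mod_iff)
    then have "p = q" using primes_dvd_imp_eq[OF q(1) p] by simp
    with E \<open>q \<le> n\<close> n have "b ^ E < b ^ 1" by simp
    then have "E < 1" using b by (simp only: power_strict_increasing_iff)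
    have "x < b" unfolding x_def using b by simp
    with upper \<open>E < 1\<close> bL show ?thesis by simp
  next
    case 4
    have "n * b ^ E < (n + 1) * b ^ E" using b by simp
    also have "\<dots> \<le> x * b ^ E" using 4 by (intro mult_right_mono) simp_all
    also have "\<dots> \<le> n * b ^ L" using lower le by simp
    finally have "b ^ E < b ^ L" by simp
    then have "Suc E \<le> L" using b by (simp add: power_strict_increasing_iff)
    then have "b ^ Suc E \<le> b ^ L" using b by (simp only: power_increasing_iff)
    moreover have "(x + 1) * b ^ E \<le> b * b ^ E"
      unfolding x_def using b by (intro mult_right_mono) (simp_all add: Suc_le_eq)
    ultimately show ?thesis using upper by simp
  qed
qed

lemma Krev_enatD:
  assumes "Krev b = enat K"
  shows "\<forall>\<^sub>F N in sequentially. sum_at_most_rev_primes b K N"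
proof -
  have ex: "\<exists>K. \<forall>\<^sub>F N in sequentially. sum_at_most_rev_primes b K N"
    using assms unfolding Krev_def by (auto split: if_splits)
  then have "K = (LEAST K. \<forall>\<^sub>F N in sequentially. sum_at_most_rev_primes b K N)"
    using assms unfolding Krev_def by simp
  with LeastI_ex[OF ex] show ?thesis by simp
qed

lemma sum_at_most_rev_primes_lower_bound:
  assumes sum: "sum_at_most_rev_primes b K (n * m)" and pos: "0 < n * m"
    and small: "\<And>r. r \<in> rev_primes b \<Longrightarrow> r \<le> n * m \<Longrightarrow> r < 2 * m"
  shows "n < 2 * K"
proof -
  obtain xs where xs: "length xs \<le> K" "set xs \<subseteq> rev_primes b" "sum_list xs = n * m"
    using sum unfolding sum_at_most_rev_primes_def by blast
  have "xs \<noteq> []" using xs(3) pos by auto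
  have "n * m = sum_list (map id xs)" using xs(3) by simp
  also have "\<dots> < sum_list (map (\<lambda>_. 2 * m) xs)"
  proof (rule sum_list_strict_mono[OF \<open>xs \<noteq> []\<close>])
    fix r assume "r \<in> set xs"
    with xs show "id r < 2 * m" using small member_le_sum_list[of r xs] by auto
  qed
  also have "\<dots> \<le> K * (2 * m)" using xs(1) by (simp add: sum_list_triv)
  finally have "n * m < 2 * K * m" by simp
  then show ?thesis by simp
qed

lemma Krev_lower_bound:
  assumes b: "1 < b" and n: "0 < n" and K: "Krev b = enat K"
    and small: "\<And>L r. 1 \<le> L \<Longrightarrow> r \<in> rev_primes b \<Longrightarrow> r \<le> n * b ^ L \<Longrightarrow> r < 2 * b ^ L"
  shows "n < 2 * K"
proof -
  obtain N0 where N0: "\<And>N. N0 \<le> N \<Longrightarrow> sum_at_most_rev_primes b K N"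
    using Krev_enatD[OF K] unfolding eventually_sequentially by blast
  define L where "L = Suc N0"
  have "N0 < b ^ L" using power_gt_expt[of b L] b unfolding L_def by simp
  also have "\<dots> \<le> n * b ^ L" using n by simp
  finally have "sum_at_most_rev_primes b K (n * b ^ L)" by (intro N0) simp
  then show ?thesis
    by (rule sum_at_most_rev_primes_lower_bound) (use b n small[of L] in \<open>simp_all add: L_def\<close>)
qed

definition primorial_base :: "nat \<Rightarrow> nat" where
  "primorial_base n = 2 ^ n * primorial n"

lemma less_primorial_base: "n < primorial_base n"
proof -
  have "n < 2 ^ n" by (rule less_exp)
  also have "\<dots> \<le> primorial_base n" using primorial_pos[of n] by (simp add: primorial_base_def)
  finally show ?thesis .
qed

lemma prime_dvd_primorial_base: "prime q \<Longrightarrow> q \<le> n \<Longrightarrow> q dvd primorial_base n"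
  unfolding primorial_base_def by (simp add: prime_dvd_primorial)

lemma strict_mono_primorial_base: "strict_mono primorial_base"
  unfolding strict_mono_Suc_iff
proof
  fix n
  have "primorial_base n \<le> 2 ^ n * primorial (Suc n)"
    unfolding primorial_base_def by (simp add: primorial_mono)
  also have "\<dots> < primorial_base (Suc n)"
    using primorial_pos[of "Suc n"] unfolding primorial_base_def by simp
  finally show "primorial_base n < primorial_base (Suc n)" .
qed

lemma ln_primorial_base_le: "ln (real (primorial_base n)) \<le> 3 * real n"
proof -
  have "primorial_base n \<le> 2 ^ n * 4 ^ n"
    using primorial_le_four_pow[of n] unfolding primorial_base_def by simp
  also have "\<dots> = 8 ^ n" by (simp flip: power_mult_distrib)
  finally have "real (primorial_base n) \<le> 8 ^ n" by (metis of_nat_le_iff of_nat_numeral of_nat_power)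
  then have "ln (real (primorial_base n)) \<le> ln (8 ^ n)"
    using less_primorial_base[of n] by simp
  also have "\<dots> = 3 * real n * ln 2"
    using ln_realpow[of 2 3] by (simp add: ln_realpow)
  also have "\<dots> \<le> 3 * real n" using ln_2_less_1 by (intro mult_left_le) simp_all
  finally show ?thesis .
qed

lemma Krev_primorial_base_lower_bound:
  assumes "2 \<le> n" "Krev (primorial_base n) = enat K"
  shows "n < 2 * K"
proof (rule Krev_lower_bound[OF _ _ assms(2)])
  show "1 < primorial_base n" using less_primorial_base[of n] assms(1) by linarith
  show "0 < n" using assms(1) by simp
  show "r < 2 * primorial_base n ^ L"
    if "1 \<le> L" "r \<in> rev_primes (primorial_base n)" "r \<le> n * primorial_base n ^ L" for L r
    using that reversed_prime_le_imp_less[OF assms(1) less_primorial_base prime_dvd_primorial_base]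
    unfolding rev_primes_def by blast
qed

theorem theorem6p5:
  shows "\<exists>c::real. c > 0 \<and> (\<exists>b :: nat \<Rightarrow> nat. strict_mono b \<and> (\<forall>i. b i \<ge> 2) \<and>
           (\<forall>i. Krev (b i) = \<infinity> \<or> c * ln (real (b i)) \<le> real (the_enat (Krev (b i)))) \<and>
           (\<forall>M::nat. \<forall>\<^sub>F i in sequentially. enat M \<le> Krev (b i)))"
proof (intro exI conjI allI)
  define b where "b i = primorial_base (i + 2)" for i
  have lower: "i + 2 < 2 * K" if "Krev (b i) = enat K" for i K
    using Krev_primorial_base_lower_bound[of "i + 2" K] that unfolding b_def by simp
  show "strict_mono b"
    using strict_mono_primorial_base unfolding b_def strict_mono_def by simp
  show "2 \<le> b i" for i
    using less_primorial_base[of "i + 2"] unfolding b_def by linarith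
  show "Krev (b i) = \<infinity> \<or> 1 / 6 * ln (real (b i)) \<le> real (the_enat (Krev (b i)))" for i
  proof (cases "Krev (b i)")
    case (enat K)
    have "ln (real (b i)) \<le> 3 * real (i + 2)" unfolding b_def by (rule ln_primorial_base_le)
    with lower[OF enat] enat show ?thesis by simp
  qed simp
  show "\<forall>\<^sub>F i in sequentially. enat M \<le> Krev (b i)" for M
    unfolding eventually_sequentially
  proof (intro exI allI impI)
    show "enat M \<le> Krev (b i)" if "2 * M \<le> i" for i
      using lower[of i] that by (cases "Krev (b i)") simp_all
  qed
qed simp

end
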